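(* Let $\lambda\in(0,\bar\gamma)$ and let $m=m(n)=\left\lceil\frac{\log n}{(\bar\gamma-\lambda)^2}\right\rceil$. Then $$\lim_{n\to\infty}\mathbb{P}\Big(\frac1m\min_{i\in\bigcup_{h=1}^m\mathcal{S}_h}\sum_{j=1}^m\gamma_{i,j}\ge\lambda\Big)=1,$$ i.e. under the MC-MWC scheme, the symmetric rate vector in which every one of the $m$ sessions has arrival rate $\lambda$ lies in the achievable region with probability tending to $1$ as $n\to\infty$.
   Context: Model: a single transmitter serves $m$ multicast sessions $h=1,\dots,m$ over $m$ orthogonal channels $j=1,\dots,m$. Session $h$ has a random set of receivers $\mathcal{S}_h$ of size $s_h=|\mathcal{S}_h|\ge1$; the $s_h$ are i.i.d. with $\mathbb{E}[s_h]=n$ (a receiver may belong to several sessions). For receiver $i$ and channel $j$, $\gamma_{i,j}\in[0,1]$ is the capacity of receiver $i$ on channel $j$; the $\gamma_{i,j}$ are i.i.d. across receivers and channels, independent of the sets $\{\mathcal{S}_h\}$, with mean $\bar\gamma$. $\log$ is the natural logarithm. The MC-MWC scheme merges all sessions into one combined session (random linear network coding over all packets of all sessions, every channel used for the combined session). For MC-MWC the paper characterizes the achievable region: the symmetric rate vector $(\lambda,\dots,\lambda)$ (each session with arrival rate $\lambda$) is achievable if and only if $\frac1m\min_{i\in\bigcup_{h}\mathcal{S}_h}\sum_{j=1}^m\gamma_{i,j}\ge\lambda$. *)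

theory Defs
  imports "HOL-Probability.Probability"
begin

definition num_sessions :: "real \<Rightarrow> real \<Rightarrow> nat \<Rightarrow> nat" where
  "num_sessions gbar lam n = nat \<lceil>ln (real n) / (gbar - lam)\<^sup>2\<rceil>"

end

theory Submission
  imports Defs "HOL-Real_Asymp.Real_Asymp"
begin

text \<open>
  The capacity \<open>\<Sum>\<^sub>j \<gamma>\<^sub>i\<^sub>j\<close> of a fixed receiver is a sum of \<open>m\<close> independent \<open>[0,1]\<close>-valued
  variables with mean \<open>gbar\<close>, so by Hoeffding's inequality it drops below \<open>\<lambda>m\<close> with probability
  at most \<open>exp(-2m(gbar - \<lambda>)\<^sup>2) \<le> 1/n\<^sup>2\<close>. As the receiver sets are independent of the capacities,
  the expected number of such receivers in one session is at most \<open>E|S\<^sub>h| / n\<^sup>2 = 1/n\<close>, and a union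
  bound over the \<open>m\<close> sessions bounds the failure probability by \<open>m/n = O(log n / n)\<close>.
\<close>

lemma Min_infinite: "infinite (A :: 'a::linorder set) \<Longrightarrow> Min A = Min {}"
  by (simp add: Min.eq_fold')

lemma finite_image_iff_list_cover:
  "finite (g ` U) \<longleftrightarrow> (\<exists>xs. (\<forall>j\<in>set xs. j \<in> U) \<and> (\<forall>i. i \<in> U \<longrightarrow> (\<exists>j\<in>set xs. g i = g j)))"
proof
  assume "finite (g ` U)"
  then obtain C where C: "C \<subseteq> U" "finite C" "g ` U = g ` C"
    by (metis finite_subset_image order_refl)
  obtain xs where "set xs = C"
    using \<open>finite C\<close> finite_list by blast
  with C show "\<exists>xs. (\<forall>j\<in>set xs. j \<in> U) \<and> (\<forall>i. i \<in> U \<longrightarrow> (\<exists>j\<in>set xs. g i = g j))"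
    by (metis image_iff subsetD)
next
  assume "\<exists>xs. (\<forall>j\<in>set xs. j \<in> U) \<and> (\<forall>i. i \<in> U \<longrightarrow> (\<exists>j\<in>set xs. g i = g j))"
  then obtain xs where "g ` U \<subseteq> g ` set xs"
    by blast
  then show "finite (g ` U)"
    by (rule finite_subset) simp
qed

text \<open>\<open>Min\<close> of an empty or infinite set is an unspecified junk value; finiteness of the image is
  made measurable by a countable existential over covering lists.\<close>

lemma pred_le_Min_image:
  fixes U :: "'a \<Rightarrow> nat set" and g :: "'a \<Rightarrow> nat \<Rightarrow> real"
  assumes [measurable]: "\<And>i. Measurable.pred M (\<lambda>\<omega>. i \<in> U \<omega>)"
    and [measurable]: "\<And>i. (\<lambda>\<omega>. g \<omega> i) \<in> borel_measurable M"
  shows "Measurable.pred M (\<lambda>\<omega>. x \<le> Min (g \<omega> ` U \<omega>))"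
proof -
  define good where "good \<omega> \<longleftrightarrow> (\<exists>i. i \<in> U \<omega>) \<and>
      (\<exists>xs. (\<forall>j\<in>set xs. j \<in> U \<omega>) \<and> (\<forall>i. i \<in> U \<omega> \<longrightarrow> (\<exists>j\<in>set xs. g \<omega> i = g \<omega> j)))" for \<omega>
  have [measurable]: "Measurable.pred M good"
    unfolding good_def by measurable
  have good_iff: "good \<omega> \<longleftrightarrow> U \<omega> \<noteq> {} \<and> finite (g \<omega> ` U \<omega>)" for \<omega>
    unfolding good_def finite_image_iff_list_cover by (simp add: ex_in_conv)
  have "x \<le> Min (g \<omega> ` U \<omega>) \<longleftrightarrow>
      (good \<omega> \<and> (\<forall>i. i \<in> U \<omega> \<longrightarrow> x \<le> g \<omega> i)) \<or> (\<not> good \<omega> \<and> x \<le> Min {})" for \<omega>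
  proof (cases "good \<omega>")
    case True
    then show ?thesis
      unfolding good_iff by (auto simp: Min_ge_iff)
  next
    case False
    then have "Min (g \<omega> ` U \<omega>) = Min {}"
      unfolding good_iff using Min_infinite by (cases "U \<omega> = {}") auto
    with False show ?thesis
      by simp
  qed
  then show ?thesis by simp
qed

lemma (in prob_space) prob_sum_less_le_Hoeffding:
  fixes X :: "'i \<Rightarrow> 'a \<Rightarrow> real" and \<mu> c :: real
  assumes "finite I" "I \<noteq> {}" and "indep_vars (\<lambda>_. borel) X I"
    and "\<And>i. i \<in> I \<Longrightarrow> AE \<omega> in M. X i \<omega> \<in> {0..1}"
    and "\<And>i. i \<in> I \<Longrightarrow> expectation (X i) = \<mu>" and "c \<le> \<mu>"
  shows "prob {\<omega> \<in> space M. (\<Sum>i\<in>I. X i \<omega>) < c * card I} \<le> exp (-2 * card I * (\<mu> - c)\<^sup>2)"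
proof -
  interpret Hoeffding_ineq M I X "\<lambda>_. 0" "\<lambda>_. 1" "card I * \<mu>"
    by unfold_locales (use assms in auto)
  have card_pos: "real (card I) > 0"
    using assms(1,2) by (simp add: card_gt_0_iff)
  have "prob {\<omega> \<in> space M. (\<Sum>i\<in>I. X i \<omega>) < c * card I}
      \<le> prob {\<omega> \<in> space M. (\<Sum>i\<in>I. X i \<omega>) \<le> card I * \<mu> - card I * (\<mu> - c)}"
    by (intro finite_measure_mono) (auto simp: algebra_simps)
  also have "\<dots> \<le> exp (-2 * (card I * (\<mu> - c))\<^sup>2 / (\<Sum>i\<in>I. (1 - 0)\<^sup>2))"
    by (rule Hoeffding_ineq_le) (use assms card_pos in auto)
  also have "\<dots> = exp (-2 * card I * (\<mu> - c)\<^sup>2)"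
    using card_pos by (simp add: power2_eq_square)
  finally show ?thesis .
qed

lemma (in prob_space) indep_set_vimage_algebraD:
  assumes "indep_set (sets (vimage_algebra (space M) f N)) (sets (vimage_algebra (space M) g K))"
    and "A \<in> sets N" "B \<in> sets K"
  shows "prob (f -` A \<inter> g -` B \<inter> space M) = prob (f -` A \<inter> space M) * prob (g -` B \<inter> space M)"
proof -
  have "f -` A \<inter> g -` B \<inter> space M = (f -` A \<inter> space M) \<inter> (g -` B \<inter> space M)" by blast
  then show ?thesis
    using indep_setD[OF assms(1) in_vimage_algebra[OF assms(2)] in_vimage_algebra[OF assms(3)]]
    by simp
qed

lemma nn_integral_card_eq_suminf_emeasure:
  fixes S :: "'a \<Rightarrow> nat set"
  assumes [measurable]: "\<And>i. Measurable.pred M (\<lambda>\<omega>. i \<in> S \<omega>)"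
    and "AE \<omega> in M. finite (S \<omega>)"
  shows "(\<integral>\<^sup>+\<omega>. of_nat (card (S \<omega>)) \<partial>M) = (\<Sum>i. emeasure M {\<omega> \<in> space M. i \<in> S \<omega>})"
proof -
  have "AE \<omega> in M. of_nat (card (S \<omega>)) = (\<Sum>i. indicator {\<omega> \<in> space M. i \<in> S \<omega>} \<omega> :: ennreal)"
    using assms(2) AE_space
  proof eventually_elim
    case (elim \<omega>)
    then have "(\<Sum>i. indicator {\<omega> \<in> space M. i \<in> S \<omega>} \<omega> :: ennreal) = (\<Sum>i\<in>S \<omega>. 1)"
      by (subst suminf_finite[of "S \<omega>"]) auto
    then show ?case by simp
  qed
  then have "(\<integral>\<^sup>+\<omega>. of_nat (card (S \<omega>)) \<partial>M) = (\<integral>\<^sup>+\<omega>. (\<Sum>i. indicator {\<omega> \<in> space M. i \<in> S \<omega>} \<omega>) \<partial>M)"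
    by (rule nn_integral_cong_AE)
  also have "\<dots> = (\<Sum>i. emeasure M {\<omega> \<in> space M. i \<in> S \<omega>})"
    by (subst nn_integral_suminf) auto
  finally show ?thesis .
qed

lemma (in prob_space) emeasure_UN_member_inter_le:
  fixes S :: "'a \<Rightarrow> nat set"
  assumes [measurable]: "\<And>i. Measurable.pred M (\<lambda>\<omega>. i \<in> S \<omega>)"
    and "AE \<omega> in M. finite (S \<omega>)"
    and A: "\<And>i. A i \<in> events" "\<And>i. prob (A i) \<le> p"
    and indep: "\<And>i. prob ({\<omega> \<in> space M. i \<in> S \<omega>} \<inter> A i) = prob {\<omega> \<in> space M. i \<in> S \<omega>} * prob (A i)"
  shows "emeasure M (\<Union>i. {\<omega> \<in> space M. i \<in> S \<omega>} \<inter> A i) \<le> ennreal p * (\<integral>\<^sup>+\<omega>. of_nat (card (S \<omega>)) \<partial>M)"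
proof -
  let ?T = "\<lambda>i. {\<omega> \<in> space M. i \<in> S \<omega>}"
  have "p \<ge> 0" using A(2) order_trans[OF measure_nonneg] by blast
  have "emeasure M (\<Union>i. ?T i \<inter> A i) \<le> (\<Sum>i. emeasure M (?T i \<inter> A i))"
    by (rule emeasure_subadditive_countably) (use A in auto)
  also have "\<dots> \<le> (\<Sum>i. ennreal p * emeasure M (?T i))"
  proof (intro suminf_le allI)
    fix i
    have "prob (?T i \<inter> A i) \<le> p * prob (?T i)"
      unfolding indep by (simp add: A(2) mult.commute mult_right_mono)
    then show "emeasure M (?T i \<inter> A i) \<le> ennreal p * emeasure M (?T i)"
      using \<open>p \<ge> 0\<close> A(1) by (simp add: emeasure_eq_measure ennreal_mult[symmetric] ennreal_leI)
  qed auto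
  also have "\<dots> = ennreal p * (\<integral>\<^sup>+\<omega>. of_nat (card (S \<omega>)) \<partial>M)"
    by (simp add: nn_integral_card_eq_suminf_emeasure[OF assms(1,2)] ennreal_suminf_cmult)
  finally show ?thesis .
qed

text \<open>The model for a single \<open>n\<close>; \<open>s\<close> is the common mean session size, i.e.\ the paper's \<open>n\<close>.\<close>

locale mc_mwc = prob_space +
  fixes S :: "nat \<Rightarrow> 'a \<Rightarrow> nat set" and \<gamma> :: "nat \<Rightarrow> nat \<Rightarrow> 'a \<Rightarrow> real"
    and m :: nat and s gbar lam :: real
  assumes m_pos: "m \<ge> 1" and lam_le: "lam \<le> gbar"
    and S_rv: "\<And>h. h \<in> {1..m} \<Longrightarrow> S h \<in> measurable M (count_space UNIV)"
    and S_fin: "\<And>h. h \<in> {1..m} \<Longrightarrow> AE \<omega> in M. finite (S h \<omega>) \<and> card (S h \<omega>) \<ge> 1"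
    and s_mean: "\<And>h. h \<in> {1..m} \<Longrightarrow>
        integrable M (\<lambda>\<omega>. real (card (S h \<omega>))) \<and> (\<integral>\<omega>. real (card (S h \<omega>)) \<partial>M) = s"
    and g_indep: "indep_vars (\<lambda>_. borel) (\<lambda>p \<omega>. \<gamma> (fst p) (snd p) \<omega>) (UNIV \<times> {1..m})"
    and g_range: "\<And>i j. j \<in> {1..m} \<Longrightarrow> AE \<omega> in M. 0 \<le> \<gamma> i j \<omega> \<and> \<gamma> i j \<omega> \<le> 1"
    and g_mean: "\<And>i j. j \<in> {1..m} \<Longrightarrow> (\<integral>\<omega>. \<gamma> i j \<omega> \<partial>M) = gbar"
    and indep_S_g: "indep_set
          (sets (vimage_algebra (space M) (\<lambda>\<omega>. \<lambda>h\<in>{1..m}. S h \<omega>)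
             (Pi\<^sub>M {1..m} (\<lambda>_. count_space UNIV))))
          (sets (vimage_algebra (space M) (\<lambda>\<omega>. \<lambda>p\<in>UNIV \<times> {1..m}. \<gamma> (fst p) (snd p) \<omega>)
             (Pi\<^sub>M (UNIV \<times> {1..m}) (\<lambda>_. borel))))"
begin

definition capacity :: "nat \<Rightarrow> 'a \<Rightarrow> real" where
  "capacity i \<omega> = (\<Sum>j=1..m. \<gamma> i j \<omega>)"

definition deficient :: "nat \<Rightarrow> 'a set" where
  "deficient i = {\<omega> \<in> space M. capacity i \<omega> < lam * m}"

lemma gamma_measurable [measurable]: "j \<in> {1..m} \<Longrightarrow> \<gamma> i j \<in> borel_measurable M"
  using g_indep unfolding indep_vars_def by auto

lemma pred_member_session [measurable]: "h \<in> {1..m} \<Longrightarrow> Measurable.pred M (\<lambda>\<omega>. i \<in> S h \<omega>)"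
  using measurable_compose[OF S_rv, of h "\<lambda>A. i \<in> A"] by simp

lemma capacity_measurable [measurable]: "capacity i \<in> borel_measurable M"
  unfolding capacity_def by measurable

lemma deficient_events [measurable]: "deficient i \<in> events"
  unfolding deficient_def by measurable

lemma mean_session_size_nonneg: "0 \<le> s"
proof -
  have "1 \<in> {1..m}"
    using m_pos by simp
  then show ?thesis
    using s_mean by (metis Bochner_Integration.integral_nonneg of_nat_0_le_iff)
qed

lemma prob_deficient_le: "prob (deficient i) \<le> exp (-2 * real m * (gbar - lam)\<^sup>2)"
proof -
  have sum_eq: "(\<Sum>q\<in>{i} \<times> {1..m}. f q) = (\<Sum>j=1..m. f (i, j))" for f :: "nat \<times> nat \<Rightarrow> real"
  proof -
    have "{i} \<times> {1..m} = Pair i ` {1..m}" by auto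
    then show ?thesis by (simp add: sum.reindex inj_on_def)
  qed
  have "prob {\<omega> \<in> space M. (\<Sum>q\<in>{i} \<times> {1..m}. \<gamma> (fst q) (snd q) \<omega>) < lam * card ({i} \<times> {1..m})}
      \<le> exp (-2 * card ({i} \<times> {1..m}) * (gbar - lam)\<^sup>2)"
    using m_pos lam_le g_range g_mean
    by (intro prob_sum_less_le_Hoeffding indep_vars_subset[OF g_indep]) auto
  moreover have "card ({i} \<times> {1..m}) = m"
    by (simp add: card_cartesian_product)
  ultimately show ?thesis
    unfolding sum_eq deficient_def capacity_def by simp
qed

lemma prob_member_deficient:
  assumes "h \<in> {1..m}"
  shows "prob ({\<omega> \<in> space M. i \<in> S h \<omega>} \<inter> deficient i)
    = prob {\<omega> \<in> space M. i \<in> S h \<omega>} * prob (deficient i)"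
proof -
  let ?S = "\<lambda>\<omega>. \<lambda>h\<in>{1..m}. S h \<omega>" and ?\<gamma> = "\<lambda>\<omega>. \<lambda>p\<in>UNIV \<times> {1..m}. \<gamma> (fst p) (snd p) \<omega>"
  let ?B = "{F \<in> space (Pi\<^sub>M {1..m} (\<lambda>_. count_space UNIV)). i \<in> F h}"
  let ?C = "{F \<in> space (Pi\<^sub>M (UNIV \<times> {1..m}) (\<lambda>_. borel)). (\<Sum>j=1..m. F (i, j)) < lam * m}"
  have "?B \<in> sets (Pi\<^sub>M {1..m} (\<lambda>_. count_space (UNIV :: nat set set)))"
    using measurable_compose[OF measurable_component_singleton[OF assms],
        where g="\<lambda>A. i \<in> A" and L="count_space UNIV"]
    by (simp add: pred_def)
  moreover have "?C \<in> sets (Pi\<^sub>M (UNIV \<times> {1..m}) (\<lambda>_. (borel :: real measure)))"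
    by measurable
  ultimately have "prob (?S -` ?B \<inter> ?\<gamma> -` ?C \<inter> space M)
      = prob (?S -` ?B \<inter> space M) * prob (?\<gamma> -` ?C \<inter> space M)"
    by (rule indep_set_vimage_algebraD[OF indep_S_g])
  moreover have "?S -` ?B \<inter> space M = {\<omega> \<in> space M. i \<in> S h \<omega>}" "?\<gamma> -` ?C \<inter> space M = deficient i"
    "?S -` ?B \<inter> ?\<gamma> -` ?C \<inter> space M = {\<omega> \<in> space M. i \<in> S h \<omega>} \<inter> deficient i"
    using assms unfolding deficient_def capacity_def by (auto simp: space_PiM)
  ultimately show ?thesis
    by (simp only:)
qed

lemma emeasure_session_deficient_le:
  assumes "h \<in> {1..m}"
  shows "emeasure M (\<Union>i. {\<omega> \<in> space M. i \<in> S h \<omega>} \<inter> deficient i)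
    \<le> ennreal (s * exp (-2 * real m * (gbar - lam)\<^sup>2))"
proof -
  have fin: "AE \<omega> in M. finite (S h \<omega>)"
    using S_fin[OF assms] by auto
  have "(\<integral>\<^sup>+\<omega>. of_nat (card (S h \<omega>)) \<partial>M) = (\<integral>\<^sup>+\<omega>. ennreal (real (card (S h \<omega>))) \<partial>M)"
    by (simp add: ennreal_of_nat_eq_real_of_nat)
  also have "\<dots> = ennreal s"
    using s_mean[OF assms] by (simp add: nn_integral_eq_integral)
  finally have "ennreal (exp (-2 * real m * (gbar - lam)\<^sup>2)) * (\<integral>\<^sup>+\<omega>. of_nat (card (S h \<omega>)) \<partial>M)
      = ennreal (exp (-2 * real m * (gbar - lam)\<^sup>2) * s)"
    by (simp add: ennreal_mult')
  moreover have "emeasure M (\<Union>i. {\<omega> \<in> space M. i \<in> S h \<omega>} \<inter> deficient i)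
      \<le> ennreal (exp (-2 * real m * (gbar - lam)\<^sup>2)) * (\<integral>\<^sup>+\<omega>. of_nat (card (S h \<omega>)) \<partial>M)"
    using assms fin prob_deficient_le prob_member_deficient[OF assms]
    by (intro emeasure_UN_member_inter_le) auto
  ultimately show ?thesis
    by (simp add: mult.commute[of s])
qed

lemma AE_min_capacity_less_imp_deficient:
  "AE \<omega> in M. Min ((\<lambda>i. capacity i \<omega>) ` (\<Union>h\<in>{1..m}. S h \<omega>)) < lam * m \<longrightarrow>
    \<omega> \<in> (\<Union>h\<in>{1..m}. \<Union>i. {\<omega> \<in> space M. i \<in> S h \<omega>} \<inter> deficient i)"
proof -
  have "AE \<omega> in M. \<forall>h\<in>{1..m}. finite (S h \<omega>) \<and> card (S h \<omega>) \<ge> 1"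
    using S_fin by (subst AE_finite_all) auto
  with AE_space show ?thesis
  proof eventually_elim
    case (elim \<omega>)
    then have "finite ((\<lambda>i. capacity i \<omega>) ` (\<Union>h\<in>{1..m}. S h \<omega>))"
      "(\<lambda>i. capacity i \<omega>) ` (\<Union>h\<in>{1..m}. S h \<omega>) \<noteq> {}"
      using m_pos by fastforce+
    then show ?case
      using elim by (auto simp: Min_less_iff deficient_def)
  qed
qed

lemma prob_min_capacity_ge:
  "measure M {\<omega> \<in> space M.
      (1 / real m) * Min ((\<lambda>i. \<Sum>j=1..m. \<gamma> i j \<omega>) ` (\<Union>h\<in>{1..m}. S h \<omega>)) \<ge> lam}
    \<ge> 1 - real m * s * exp (-2 * real m * (gbar - lam)\<^sup>2)"
  (is "prob ?E \<ge> _")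
proof -
  let ?p = "exp (-2 * real m * (gbar - lam)\<^sup>2)"
  let ?W = "\<Union>h\<in>{1..m}. \<Union>i. {\<omega> \<in> space M. i \<in> S h \<omega>} \<inter> deficient i"
  have "lam \<le> 1 / real m * y \<longleftrightarrow> lam * m \<le> y" for y
    using m_pos by (simp add: field_simps)
  then have E_eq: "?E = {\<omega> \<in> space M. lam * m \<le> Min ((\<lambda>i. capacity i \<omega>) ` (\<Union>h\<in>{1..m}. S h \<omega>))}"
    unfolding capacity_def by simp
  have receivers_pred: "Measurable.pred M (\<lambda>\<omega>. i \<in> (\<Union>h\<in>{1..m}. S h \<omega>))" for i
    unfolding UN_iff by measurable
  have "?E \<in> events"
    unfolding E_eq by (rule predE[OF pred_le_Min_image[OF receivers_pred capacity_measurable]])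
  have "{\<omega> \<in> space M. i \<in> S h \<omega>} \<in> events" if "h \<in> {1..m}" for h i
    using that by measurable
  then have "?W \<in> events"
    using deficient_events by (intro sets.finite_UN sets.countable_UN' sets.Int) auto
  have "AE \<omega> in M. \<omega> \<in> space M - ?E \<longrightarrow> \<omega> \<in> ?W"
    using AE_min_capacity_less_imp_deficient
  proof eventually_elim
    case (elim \<omega>)
    show ?case
    proof
      assume "\<omega> \<in> space M - ?E"
      then have "Min ((\<lambda>i. capacity i \<omega>) ` (\<Union>h\<in>{1..m}. S h \<omega>)) < lam * m"
        unfolding E_eq by auto
      then show "\<omega> \<in> ?W"
        by (rule mp[OF elim])
    qed
  qed
  then have "emeasure M (space M - ?E) \<le> emeasure M ?W"
    using \<open>?W \<in> events\<close> by (rule emeasure_mono_AE)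
  also have "\<dots> \<le> (\<Sum>h\<in>{1..m}. emeasure M (\<Union>i. {\<omega> \<in> space M. i \<in> S h \<omega>} \<inter> deficient i))"
    by (intro emeasure_subadditive_finite) auto
  also have "\<dots> \<le> (\<Sum>h\<in>{1..m}. ennreal (s * ?p))"
    by (intro sum_mono emeasure_session_deficient_le)
  also have "\<dots> = ennreal (real m * s * ?p)"
    by (simp add: ennreal_of_nat_eq_real_of_nat[symmetric] ennreal_mult' mult.assoc)
  finally have "prob (space M - ?E) \<le> real m * s * ?p"
    using mean_session_size_nonneg by (simp add: emeasure_eq_measure ennreal_le_iff)
  then show ?thesis
    using prob_compl[OF \<open>?E \<in> events\<close>] by linarith
qed

end

lemma ln_le_num_sessions:
  assumes "gbar \<noteq> lam"
  shows "ln (real n) \<le> real (num_sessions gbar lam n) * (gbar - lam)\<^sup>2"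
proof -
  have "ln (real n) / (gbar - lam)\<^sup>2 \<le> real (num_sessions gbar lam n)"
    unfolding num_sessions_def by linarith
  then show ?thesis
    using assms by (simp add: field_simps)
qed

lemma num_sessions_ge_1: "n \<ge> 2 \<Longrightarrow> gbar \<noteq> lam \<Longrightarrow> num_sessions gbar lam n \<ge> 1"
  unfolding num_sessions_def by (simp add: Suc_le_eq)

lemma num_sessions_over_n_tendsto_0: "(\<lambda>n. real (num_sessions gbar lam n) / real n) \<longlonglongrightarrow> 0"
proof -
  define c where "c = 1 / (gbar - lam)\<^sup>2"
  have "real (num_sessions gbar lam n) \<le> c * ln (real n) + 1" if "n \<ge> 1" for n
  proof -
    have "0 \<le> c * ln (real n)"
      using that unfolding c_def by simp
    moreover have "ln (real n) / (gbar - lam)\<^sup>2 = c * ln (real n)"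
      unfolding c_def by simp
    ultimately show ?thesis
      unfolding num_sessions_def by (simp add: of_int_ceiling_le_add_one)
  qed
  then have upper: "\<forall>\<^sub>F n in sequentially.
      real (num_sessions gbar lam n) / real n \<le> (c * ln (real n) + 1) / real n"
    by (intro eventually_sequentiallyI[of 1] divide_right_mono) auto
  have "(\<lambda>n. (c * ln (real n) + 1) / real n) \<longlonglongrightarrow> 0"
    by real_asymp
  with upper show ?thesis
    by (intro tendsto_sandwich[OF _ upper tendsto_const]) auto
qed

lemma mult_exp_le_inverse:
  fixes x t :: real
  assumes "x > 0" and "ln x \<le> t"
  shows "x * exp (-2 * t) \<le> 1 / x"
proof -
  have "exp (-2 * t) \<le> exp (-2 * ln x)"
    using assms(2) by simp
  also have "\<dots> = inverse (exp (ln x) * exp (ln x))"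
    by (simp add: exp_add[symmetric] exp_minus[symmetric])
  also have "\<dots> = 1 / (x * x)"
    using assms(1) by (simp add: field_simps)
  finally show ?thesis
    using assms(1) by (simp add: field_simps)
qed

lemma num_sessions_union_bound_le:
  assumes "gbar \<noteq> lam" and "n \<ge> 1"
  defines "k \<equiv> real (num_sessions gbar lam n)"
  shows "k * real n * exp (-2 * k * (gbar - lam)\<^sup>2) \<le> k / real n"
proof -
  have "real n * exp (-2 * (k * (gbar - lam)\<^sup>2)) \<le> 1 / real n"
    using assms by (intro mult_exp_le_inverse) (auto simp: ln_le_num_sessions)
  then have "k * (real n * exp (-2 * (k * (gbar - lam)\<^sup>2))) \<le> k * (1 / real n)"
    by (rule mult_left_mono) (simp add: k_def)
  then show ?thesis
    by (simp add: mult.assoc)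
qed

theorem theorem2:
  fixes M :: "nat \<Rightarrow> 'a measure"
    and S :: "nat \<Rightarrow> nat \<Rightarrow> 'a \<Rightarrow> nat set"
    and \<gamma> :: "nat \<Rightarrow> nat \<Rightarrow> nat \<Rightarrow> 'a \<Rightarrow> real"
    and gbar lam :: real
  defines "m \<equiv> num_sessions gbar lam"
  assumes lam_pos: "0 < lam" and lam_lt: "lam < gbar"
    and prob: "\<And>n. n \<ge> 1 \<Longrightarrow> prob_space (M n)"
    and S_rv: "\<And>n h. n \<ge> 1 \<Longrightarrow> h \<in> {1..m n} \<Longrightarrow>
        S n h \<in> measurable (M n) (count_space UNIV)"
    and S_fin: "\<And>n h. n \<ge> 1 \<Longrightarrow> h \<in> {1..m n} \<Longrightarrow>
        AE \<omega> in M n. finite (S n h \<omega>) \<and> card (S n h \<omega>) \<ge> 1"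
    and s_indep: "\<And>n. n \<ge> 1 \<Longrightarrow>
        prob_space.indep_vars (M n) (\<lambda>_. count_space UNIV) (\<lambda>h \<omega>. card (S n h \<omega>)) {1..m n}"
    and s_ident: "\<And>n h h'. n \<ge> 1 \<Longrightarrow> h \<in> {1..m n} \<Longrightarrow> h' \<in> {1..m n} \<Longrightarrow>
        distr (M n) (count_space UNIV) (\<lambda>\<omega>. card (S n h \<omega>))
          = distr (M n) (count_space UNIV) (\<lambda>\<omega>. card (S n h' \<omega>))"
    and s_mean: "\<And>n h. n \<ge> 1 \<Longrightarrow> h \<in> {1..m n} \<Longrightarrow>
        integrable (M n) (\<lambda>\<omega>. real (card (S n h \<omega>))) \<and>
        (\<integral>\<omega>. real (card (S n h \<omega>)) \<partial>M n) = real n"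
    and g_indep: "\<And>n. n \<ge> 1 \<Longrightarrow>
        prob_space.indep_vars (M n) (\<lambda>_. borel) (\<lambda>p \<omega>. \<gamma> n (fst p) (snd p) \<omega>)
          (UNIV \<times> {1..m n})"
    and g_ident: "\<And>n i j i' j'. n \<ge> 1 \<Longrightarrow> j \<in> {1..m n} \<Longrightarrow> j' \<in> {1..m n} \<Longrightarrow>
        distr (M n) borel (\<gamma> n i j) = distr (M n) borel (\<gamma> n i' j')"
    and g_range: "\<And>n i j. n \<ge> 1 \<Longrightarrow> j \<in> {1..m n} \<Longrightarrow>
        AE \<omega> in M n. 0 \<le> \<gamma> n i j \<omega> \<and> \<gamma> n i j \<omega> \<le> 1"
    and g_mean: "\<And>n i j. n \<ge> 1 \<Longrightarrow> j \<in> {1..m n} \<Longrightarrow>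
        (\<integral>\<omega>. \<gamma> n i j \<omega> \<partial>M n) = gbar"
    and indep_S_g: "\<And>n. n \<ge> 1 \<Longrightarrow>
        prob_space.indep_set (M n)
          (sets (vimage_algebra (space (M n)) (\<lambda>\<omega>. \<lambda>h\<in>{1..m n}. S n h \<omega>)
             (Pi\<^sub>M {1..m n} (\<lambda>_. count_space UNIV))))
          (sets (vimage_algebra (space (M n)) (\<lambda>\<omega>. \<lambda>p\<in>UNIV \<times> {1..m n}. \<gamma> n (fst p) (snd p) \<omega>)
             (Pi\<^sub>M (UNIV \<times> {1..m n}) (\<lambda>_. borel))))"
  shows "(\<lambda>n. measure (M n) {\<omega> \<in> space (M n).
            (1 / real (m n)) * Min ((\<lambda>i. \<Sum>j=1..m n. \<gamma> n i j \<omega>) ` (\<Union>h\<in>{1..m n}. S n h \<omega>)) \<ge> lam})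
         \<longlonglongrightarrow> 1"
proof -
  let ?P = "\<lambda>n. measure (M n) {\<omega> \<in> space (M n).
            (1 / real (m n)) * Min ((\<lambda>i. \<Sum>j=1..m n. \<gamma> n i j \<omega>) ` (\<Union>h\<in>{1..m n}. S n h \<omega>)) \<ge> lam}"
  have lower: "1 - real (m n) / real n \<le> ?P n" if "n \<ge> 2" for n
  proof -
    have n: "n \<ge> 1" using that by simp
    have "m n \<ge> 1"
      using that lam_lt unfolding m_def by (intro num_sessions_ge_1) auto
    have "mc_mwc (M n) (S n) (\<gamma> n) (m n) (real n) gbar lam"
      unfolding mc_mwc_def mc_mwc_axioms_def
      using prob[OF n] \<open>m n \<ge> 1\<close> lam_lt S_rv[OF n] S_fin[OF n] s_mean[OF n] g_indep[OF n]
        g_range[OF n] g_mean[OF n] indep_S_g[OF n]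
      by simp
    then have "?P n \<ge> 1 - real (m n) * real n * exp (-2 * real (m n) * (gbar - lam)\<^sup>2)"
      by (rule mc_mwc.prob_min_capacity_ge)
    moreover have "real (m n) * real n * exp (-2 * real (m n) * (gbar - lam)\<^sup>2) \<le> real (m n) / real n"
      using n lam_lt unfolding m_def by (intro num_sessions_union_bound_le) auto
    ultimately show ?thesis
      by linarith
  qed
  have upper: "?P n \<le> 1" if "n \<ge> 1" for n
    using prob_space.prob_le_1[OF prob[OF that]] .
  have lim: "(\<lambda>n. 1 - real (m n) / real n) \<longlonglongrightarrow> 1"
    using tendsto_diff[OF tendsto_const num_sessions_over_n_tendsto_0, of 1 gbar lam]
    unfolding m_def by simp
  show ?thesis
  proof (rule tendsto_sandwich[OF _ _ lim tendsto_const])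
    show "\<forall>\<^sub>F n in sequentially. 1 - real (m n) / real n \<le> ?P n"
      using lower by (rule eventually_sequentiallyI)
    show "\<forall>\<^sub>F n in sequentially. ?P n \<le> 1"
      using upper by (rule eventually_sequentiallyI)
  qed
qed

end
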